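(* Let $k$ be an algebraically closed field with $\operatorname{char}(k)\neq 2$, let $\alpha\in k$ with $\alpha(1-\alpha^2)\neq 0$, and let $A(\alpha)$ be the $k$-algebra on degree-one generators $x_1,\dots,x_4$ with defining relations \[ x_3x_1+x_1x_3=0,\quad x_3x_2-x_2x_3=0,\quad 2x_2^2+\alpha x_3^2=x_1^2,\quad x_4x_1+x_1x_4=0,\quad x_2^2-x_4^2=0,\quad x_4x_2+x_2x_4=x_3^2 . \] Let $\Gamma\subset\mathbb P^3\times\mathbb P^3$ be the point scheme of $A(\alpha)$, i.e. the zero locus of these six relations, where $\sum c_{ij}x_ix_j$ is evaluated at $(p,q)$ as $\sum c_{ij}p_iq_j$. Let $\mathfrak p$ be the projection of $\Gamma$ to the first factor and $\sigma$ the automorphism of $\mathfrak p$ whose graph is $\Gamma$. Then the points of $\Gamma$ are closed, of the form $(q,\sigma(q))$, and are exactly: (o) $(e_1,e_2),(e_2,e_1),(e_3,e_4),(e_4,e_3)$, where $e_1,\dots,e_4$ are the coordinate points; (i) $((\lambda_1,1,\lambda_3,1),(-\lambda_1,1,\lambda_3,1))$ with $\lambda_1^2=-2(1+\alpha)$, $\lambda_3^2=2$; (ii) $((\lambda_1,-1,\lambda_3,1),(-\lambda_1,-1,\lambda_3,1))$ with $\lambda_1^2=-2(1-\alpha)$, $\lambda_3^2=-2$; (iii) $((\lambda_1,\lambda_2,0,1),(-\lambda_1,-\lambda_2,0,1))$ with $\lambda_1^2=-2$, $\lambda_2^2=-1$; (iv) $((0,\lambda_2,\lambda_3,1),(0,\lambda_2,\lambda_3,\lambda_2^2))$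 with $\alpha\lambda_2^2+2\lambda_2+\alpha=0$, $\alpha\lambda_3^2=-2\lambda_2^2$. Furthermore, $\sigma(Z_i)=Z_i$ for every $i=0,\dots,4$, and $\sigma$ has ten orbits of order two, where $Z_0=\{e_1,\dots,e_4\}$ and $Z_1,\dots,Z_4$ are the sets of first coordinates of the points listed in (i)–(iv) respectively.
   Context: It is known (and used by the paper) that for this algebra $\Gamma$ is the graph of an automorphism $\sigma$ of $\mathfrak p$. *)

theory Defs
  imports "HOL-Computational_Algebra.Polynomial"
begin

definition alg_closed :: "'k::field itself \<Rightarrow> bool" where
  "alg_closed _ \<longleftrightarrow> (\<forall>p :: 'k poly. degree p \<ge> 1 \<longrightarrow> (\<exists>x. poly p x = 0))"

text \<open>Vectors in k^4 (homogeneous coordinates of points of P^3).\<close>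
datatype 'k pt4 = P4 'k 'k 'k 'k

fun smul4 :: "'k::times \<Rightarrow> 'k pt4 \<Rightarrow> 'k pt4" where
  "smul4 c (P4 a b d e) = P4 (c*a) (c*b) (c*d) (c*e)"

definition zero4 :: "'k::zero pt4" where "zero4 = P4 0 0 0 0"

definition proj_class :: "'k::field pt4 \<Rightarrow> 'k pt4 set" where
  "proj_class p = {q. q \<noteq> zero4 \<and> (\<exists>c. c \<noteq> 0 \<and> q = smul4 c p)}"

fun rels :: "'k::field \<Rightarrow> 'k pt4 \<Rightarrow> 'k pt4 \<Rightarrow> bool" where
  "rels \<alpha> (P4 p1 p2 p3 p4) (P4 q1 q2 q3 q4) \<longleftrightarrow>
     p3*q1 + p1*q3 = 0 \<and>
     p3*q2 - p2*q3 = 0 \<and>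
     2*p2*q2 + \<alpha>*p3*q3 - p1*q1 = 0 \<and>
     p4*q1 + p1*q4 = 0 \<and>
     p2*q2 - p4*q4 = 0 \<and>
     p4*q2 + p2*q4 - p3*q3 = 0"

text \<open>The point scheme Gamma, as the set of pairs of points of P^3 (closed points).\<close>
definition Gamma :: "'k::field \<Rightarrow> ('k pt4 set \<times> 'k pt4 set) set" where
  "Gamma \<alpha> = {(proj_class p, proj_class q) | p q.
       p \<noteq> zero4 \<and> q \<noteq> zero4 \<and> rels \<alpha> p q}"

definition frakp :: "'k::field \<Rightarrow> 'k pt4 set set" where
  "frakp \<alpha> = fst ` Gamma \<alpha>"

definition sigma :: "'k::field \<Rightarrow> 'k pt4 set \<Rightarrow> 'k pt4 set" where
  "sigma \<alpha> P = (THE Q. (P, Q) \<in> Gamma \<alpha>)"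

definition sigma_orbit :: "'k::field \<Rightarrow> 'k pt4 set \<Rightarrow> 'k pt4 set set" where
  "sigma_orbit \<alpha> P = {((sigma \<alpha>) ^^ n) P | n. True}"

fun L :: "'k::field \<Rightarrow> nat \<Rightarrow> ('k pt4 \<times> 'k pt4) set" where
  "L \<alpha> 0 = {(P4 1 0 0 0, P4 0 1 0 0), (P4 0 1 0 0, P4 1 0 0 0),
             (P4 0 0 1 0, P4 0 0 0 1), (P4 0 0 0 1, P4 0 0 1 0)}"
| "L \<alpha> (Suc 0) = {(P4 l1 1 l3 1, P4 (-l1) 1 l3 1) | l1 l3.
             l1^2 = -2*(1+\<alpha>) \<and> l3^2 = 2}"
| "L \<alpha> (Suc (Suc 0)) = {(P4 l1 (-1) l3 1, P4 (-l1) (-1) l3 1) | l1 l3.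
             l1^2 = -2*(1-\<alpha>) \<and> l3^2 = -2}"
| "L \<alpha> (Suc (Suc (Suc 0))) = {(P4 l1 l2 0 1, P4 (-l1) (-l2) 0 1) | l1 l2.
             l1^2 = -2 \<and> l2^2 = -1}"
| "L \<alpha> (Suc (Suc (Suc (Suc 0)))) = {(P4 0 l2 l3 1, P4 0 l2 l3 (l2^2)) | l2 l3.
             \<alpha>*l2^2 + 2*l2 + \<alpha> = 0 \<and> \<alpha>*l3^2 = -2*l2^2}"
| "L \<alpha> _ = {}"

definition Z :: "'k::field \<Rightarrow> nat \<Rightarrow> 'k pt4 set set" where
  "Z \<alpha> i = (\<lambda>(a, b). proj_class a) ` L \<alpha> i"

end

theory Submission
  imports Defs
begin

text \<open>
  Solving the six bilinear relations by a case distinction on the vanishing coordinates of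
  \<open>p\<close> and \<open>q\<close> shows that every point of \<open>\<Gamma>\<close> is, up to scalars, one of the listed pairs, and
  in the list the second point is determined by the first: \<open>\<Gamma>\<close> is the graph of \<open>\<sigma>\<close>.
  Each family is closed under swapping the two points (for family (iv) through the
  substitution \<open>\<lambda>\<^sub>2 \<mapsto> 1/\<lambda>\<^sub>2\<close>, which exchanges the two roots of \<open>\<alpha>x\<^sup>2 + 2x + \<alpha>\<close>), and the two points
  of a pair are distinct, so \<open>\<sigma>\<close> is a fixed-point-free involution of \<open>frakp \<alpha>\<close> preserving every
  \<open>Z\<^sub>i\<close>. Over an algebraically closed field of characteristic not 2 every defining equation
  of a family has exactly two roots, so each \<open>Z\<^sub>i\<close> has four points; the \<open>Z\<^sub>i\<close> are disjoint,
  hence \<open>frakp \<alpha>\<close> has 20 points and splits into ten \<open>\<sigma>\<close>-orbits of size two.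
\<close>

lemma card_quadratic_roots:
  fixes a b c :: "'k::field"
  assumes "alg_closed TYPE('k)" and "a \<noteq> 0" and "b^2 - 4*a*c \<noteq> 0"
  shows "card {x. a*x^2 + b*x + c = 0} = 2"
proof -
  have "degree [:c, b, a:] \<ge> 1" using assms(2) by simp
  then obtain s where "poly [:c, b, a:] s = 0"
    using assms(1) unfolding alg_closed_def by blast
  then have s: "a*s^2 + b*s + c = 0" by (simp add: algebra_simps power2_eq_square)
  define s' where "s' = -b/a - s"
  have factor: "a*x^2 + b*x + c = a * ((x - s) * (x - s'))" for x
    using s assms(2) unfolding s'_def by (simp add: field_simps power2_eq_square) algebra
  have "(2*a*s + b)^2 = b^2 - 4*a*c" using s by algebra
  then have "2*a*s + b \<noteq> 0" using assms(3) by auto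
  moreover have "a * (s - s') = 2*a*s + b"
    using assms(2) unfolding s'_def by (simp add: field_simps)
  ultimately have "s' \<noteq> s" by auto
  moreover have "{x. a*x^2 + b*x + c = 0} = {s, s'}"
    unfolding factor using assms(2) by auto
  ultimately show ?thesis by simp
qed

lemma funpow_orbit_involution:
  assumes "f (f x) = x"
  shows "{(f ^^ n) x | n. True} = {x, f x}"
proof -
  have "(f ^^ n) x = (if even n then x else f x)" for n
    using assms by (induction n) auto
  then show ?thesis by (auto intro: exI[of _ 0] exI[of _ 1])
qed

lemma card_orbits_involution:
  assumes "finite S" and "\<And>x. x \<in> S \<Longrightarrow> f x \<in> S \<and> f (f x) = x \<and> f x \<noteq> x"
  shows "2 * card ((\<lambda>x. {x, f x}) ` S) = card S"
proof -
  have "\<Union>((\<lambda>x. {x, f x}) ` S) = S" using assms(2) by auto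
  moreover have "2 * card ((\<lambda>x. {x, f x}) ` S) = card (\<Union>((\<lambda>x. {x, f x}) ` S))"
  proof (rule card_partition)
    show "finite ((\<lambda>x. {x, f x}) ` S)" using assms(1) by simp
    show "finite (\<Union>((\<lambda>x. {x, f x}) ` S))" using assms by auto
    show "card c = 2" if c: "c \<in> (\<lambda>x. {x, f x}) ` S" for c
    proof -
      obtain x where "x \<in> S" "c = {x, f x}" using c by blast
      moreover from this have "x \<noteq> f x" using assms(2) by metis
      ultimately show ?thesis by simp
    qed
    show "c1 \<inter> c2 = {}"
      if c: "c1 \<in> (\<lambda>x. {x, f x}) ` S" "c2 \<in> (\<lambda>x. {x, f x}) ` S" "c1 \<noteq> c2" for c1 c2
    proof (rule ccontr)
      obtain x y where x: "x \<in> S" "c1 = {x, f x}" and y: "y \<in> S" "c2 = {y, f y}"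
        using c(1,2) by blast
      have fx: "f (f x) = x" and fy: "f (f y) = y" using x(1) y(1) assms(2) by blast+
      assume "c1 \<inter> c2 \<noteq> {}"
      then have "y = x \<or> y = f x \<or> f y = x \<or> f y = f x" using x(2) y(2) by auto
      then have "y = x \<or> y = f x" using fx fy by metis
      then have "c2 = c1" using x(2) y(2) fx by auto
      then show False using c(3) by simp
    qed
  qed
  ultimately show ?thesis by simp
qed

lemma smul4_smul4 [simp]: "smul4 (c::'k::field) (smul4 d p) = smul4 (c * d) p"
  by (cases p) (simp add: mult.assoc)

lemma smul4_one [simp]: "smul4 (1::'k::field) p = p"
  by (cases p) simp

lemma proj_class_smul4:
  assumes "(c::'k::field) \<noteq> 0"
  shows "proj_class (smul4 c p) = proj_class p"
proof -
  have "smul4 e (smul4 c p) = smul4 (e * c) p" "smul4 e p = smul4 (e / c) (smul4 c p)" for e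
    using assms by simp_all
  then show ?thesis
    unfolding proj_class_def using assms by (metis divide_eq_0_iff mult_eq_0_iff)
qed

lemma proj_class_eq_iff:
  assumes "a \<noteq> zero4" "b \<noteq> zero4"
  shows "proj_class a = proj_class (b::'k::field pt4) \<longleftrightarrow> (\<exists>c. c \<noteq> 0 \<and> b = smul4 c a)"
proof
  assume "proj_class a = proj_class b"
  moreover have "b \<in> proj_class b"
    unfolding proj_class_def using assms(2) by (auto intro: exI[of _ 1])
  ultimately show "\<exists>c. c \<noteq> 0 \<and> b = smul4 c a"
    unfolding proj_class_def by auto
qed (metis proj_class_smul4)

definition family_points :: "'k::field \<Rightarrow> nat \<Rightarrow> ('k pt4 set \<times> 'k pt4 set) set" where
  "family_points \<alpha> i = (\<lambda>(a, b). (proj_class a, proj_class b)) ` L \<alpha> i"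

definition listed_points :: "'k::field \<Rightarrow> ('k pt4 set \<times> 'k pt4 set) set" where
  "listed_points \<alpha> = (\<Union>i\<le>4. family_points \<alpha> i)"

lemma family_pointsI: "(a, b) \<in> L \<alpha> i \<Longrightarrow> (proj_class a, proj_class b) \<in> family_points \<alpha> i"
  unfolding family_points_def by force

lemma family_pointsE:
  assumes "(P, Q) \<in> family_points \<alpha> i"
  obtains a b where "(a, b) \<in> L \<alpha> i" "P = proj_class a" "Q = proj_class b"
  using assms unfolding family_points_def by auto

lemma Z_eq_fst_family_points: "Z \<alpha> i = fst ` family_points \<alpha> i"
  unfolding Z_def family_points_def image_image by (simp add: case_prod_beta')

lemma listed_pointsI:
  assumes "(a, b) \<in> L \<alpha> i" "i \<le> 4" "c \<noteq> 0" "d \<noteq> 0" "p = smul4 c a" "q = smul4 d b"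
  shows "(proj_class p, proj_class q) \<in> listed_points \<alpha>"
  using assms family_pointsI[OF assms(1)] unfolding listed_points_def
  by (auto simp: proj_class_smul4)

lemma listed_pointsE:
  assumes "(P, Q) \<in> listed_points \<alpha>"
  obtains i a b where "(a, b) \<in> L \<alpha> i" "P = proj_class a" "Q = proj_class b"
  using assms unfolding listed_points_def by (auto elim: family_pointsE)

lemma L_family_i_memI:
  "l1^2 = -2*(1+\<alpha>) \<Longrightarrow> l3^2 = 2 \<Longrightarrow> (P4 l1 1 l3 1, P4 (-l1) 1 l3 1) \<in> L \<alpha> 1"
  by auto

lemma L_family_ii_memI:
  "l1^2 = -2*(1-\<alpha>) \<Longrightarrow> l3^2 = -2 \<Longrightarrow> (P4 l1 (-1) l3 1, P4 (-l1) (-1) l3 1) \<in> L \<alpha> 2"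
  by (auto simp: numeral_eq_Suc)

lemma L_family_iii_memI:
  "l1^2 = -2 \<Longrightarrow> l2^2 = -1 \<Longrightarrow> (P4 l1 l2 0 1, P4 (-l1) (-l2) 0 1) \<in> L \<alpha> 3"
  by (auto simp: numeral_eq_Suc)

lemma L_family_iv_memI:
  "\<alpha>*l2^2 + 2*l2 + \<alpha> = 0 \<Longrightarrow> \<alpha>*l3^2 = -2*l2^2 \<Longrightarrow> (P4 0 l2 l3 1, P4 0 l2 l3 (l2^2)) \<in> L \<alpha> 4"
  by (auto simp: numeral_eq_Suc)

lemma L_memE:
  assumes "(a, b) \<in> L \<alpha> i"
  obtains (coordinate) "i = 0" "(a, b) \<in> L \<alpha> 0"
  | (family_i) l1 l3 where "i = 1" "a = P4 l1 1 l3 1" "b = P4 (-l1) 1 l3 1"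
      "l1^2 = -2*(1+\<alpha>)" "l3^2 = 2"
  | (family_ii) l1 l3 where "i = 2" "a = P4 l1 (-1) l3 1" "b = P4 (-l1) (-1) l3 1"
      "l1^2 = -2*(1-\<alpha>)" "l3^2 = -2"
  | (family_iii) l1 l2 where "i = 3" "a = P4 l1 l2 0 1" "b = P4 (-l1) (-l2) 0 1"
      "l1^2 = -2" "l2^2 = -1"
  | (family_iv) l2 l3 where "i = 4" "a = P4 0 l2 l3 1" "b = P4 0 l2 l3 (l2^2)"
      "\<alpha>*l2^2 + 2*l2 + \<alpha> = 0" "\<alpha>*l3^2 = -2*l2^2"
  using assms by (cases "(\<alpha>, i)" rule: L.cases) (auto simp: numeral_eq_Suc intro: that)

lemma L_first_normalized:
  assumes "(a, b) \<in> L \<alpha> i"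
  shows "a \<in> {P4 1 0 0 0, P4 0 1 0 0, P4 0 0 1 0} \<or> (\<exists>x y z. a = P4 x y z 1)"
  using assms by (cases rule: L_memE) auto

lemma L_first_scalar_multiple:
  assumes "(a, b) \<in> L \<alpha> i" "(a', b') \<in> L \<alpha> j" "c \<noteq> 0" "a' = smul4 c a"
  shows "a' = a"
  using L_first_normalized[OF assms(1)] L_first_normalized[OF assms(2)] assms(3,4)
  by auto

text \<open>The families are told apart by which of \<open>x\<^sub>1\<close>, \<open>x\<^sub>3\<close> vanish and by \<open>x\<^sub>2 = \<plusminus>1\<close>; the
  value is only meaningful on first coordinates of listed pairs.\<close>
definition family_index :: "'k::field pt4 \<Rightarrow> nat" where
  "family_index a =
    (if a \<in> {P4 1 0 0 0, P4 0 1 0 0, P4 0 0 1 0, P4 0 0 0 1} then 0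
     else case a of P4 x y z _ \<Rightarrow> if x = 0 then 4 else if z = 0 then 3 else if y = 1 then 1 else 2)"

section \<open>Solving the relations\<close>

locale point_scheme =
  fixes \<alpha> :: "'k::field"
  assumes two_nonzero: "(2::'k) \<noteq> 0"
    and alpha_generic: "\<alpha> * (1 - \<alpha>^2) \<noteq> 0"
begin

lemma alpha_nonzero: "\<alpha> \<noteq> 0"
  using alpha_generic by auto

lemma alpha_sq_neq_one: "\<alpha>^2 \<noteq> 1"
  using alpha_generic by auto

lemma
  one_plus_alpha_nonzero: "1 + \<alpha> \<noteq> 0" and
  one_minus_alpha_nonzero: "1 - \<alpha> \<noteq> 0"
proof -
  have "(1 - \<alpha>) * (1 + \<alpha>) \<noteq> 0"
    using alpha_sq_neq_one by (simp add: algebra_simps power2_eq_square)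
  then show "1 + \<alpha> \<noteq> 0" "1 - \<alpha> \<noteq> 0" by auto
qed

lemma four_nonzero: "(4::'k) \<noteq> 0"
  using two_nonzero mult_eq_0_iff[of "2::'k" 2] by simp

lemma one_neq_minus_one: "(1::'k) \<noteq> -1"
  using two_nonzero by (metis add.right_inverse one_add_one)

lemma self_eq_neg_iff: "x = -x \<longleftrightarrow> (x::'k) = 0"
  using two_nonzero by (metis add.inverse_neutral eq_neg_iff_add_eq_0 mult_2 mult_eq_0_iff)

lemma family_constants_nonzero:
  "-2*(1+\<alpha>) \<noteq> 0" "-2*(1-\<alpha>) \<noteq> 0" "(-2::'k) \<noteq> 0" "(-1::'k) \<noteq> 0"
  using two_nonzero one_plus_alpha_nonzero one_minus_alpha_nonzero
  by (simp_all only: mult_eq_0_iff neg_equal_0_iff_equal) simp_all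

lemma square_roots_nonzero:
  "x^2 = -2*(1+\<alpha>) \<Longrightarrow> x \<noteq> 0" "x^2 = -2*(1-\<alpha>) \<Longrightarrow> x \<noteq> 0"
  "x^2 = 2 \<Longrightarrow> x \<noteq> 0" "x^2 = -2 \<Longrightarrow> x \<noteq> 0" "x^2 = -1 \<Longrightarrow> x \<noteq> 0"
proof -
  have nonzero_root: "x^2 = c \<Longrightarrow> c \<noteq> 0 \<Longrightarrow> x \<noteq> 0" for c :: 'k
    by auto
  with two_nonzero family_constants_nonzero show
    "x^2 = -2*(1+\<alpha>) \<Longrightarrow> x \<noteq> 0" "x^2 = -2*(1-\<alpha>) \<Longrightarrow> x \<noteq> 0"
    "x^2 = 2 \<Longrightarrow> x \<noteq> 0" "x^2 = -2 \<Longrightarrow> x \<noteq> 0" "x^2 = -1 \<Longrightarrow> x \<noteq> 0"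
    by simp_all
qed

lemma family_iv_parameters:
  assumes "\<alpha>*l2^2 + 2*l2 + \<alpha> = 0" "\<alpha>*l3^2 = -2*l2^2"
  shows "l2 \<noteq> 0" "l3 \<noteq> 0" "l3^2 = l2 + l2^3" "l2^2 \<noteq> 1"
proof -
  show l2: "l2 \<noteq> 0" using assms(1) alpha_nonzero by auto
  show "l3 \<noteq> 0" using assms(2) l2 two_nonzero by auto
  have "\<alpha>*(l2 + l2^3) = \<alpha>*l3^2" using assms by algebra
  then show "l3^2 = l2 + l2^3" using alpha_nonzero by simp
  show "l2^2 \<noteq> 1"
  proof
    assume l2_sq: "l2^2 = 1"
    then have "2*(\<alpha> + l2) = 0" using assms(1) by algebra
    then have "\<alpha> + l2 = 0" using two_nonzero by (metis mult_eq_0_iff)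
    then have "\<alpha>^2 = l2^2" by algebra
    then show False using alpha_sq_neq_one l2_sq by simp
  qed
qed

lemma rels_first_zero_degenerate:
  assumes R: "rels \<alpha> (P4 0 p2 p3 p4) (P4 q1 q2 q3 q4)"
    and pn: "P4 0 p2 p3 p4 \<noteq> zero4" and qn: "P4 q1 q2 q3 q4 \<noteq> zero4"
    and degenerate: "p3 = 0 \<or> q3 = 0"
  shows "(proj_class (P4 0 p2 p3 p4), proj_class (P4 q1 q2 q3 q4)) \<in> listed_points \<alpha>"
proof -
  from R have r1: "p3*q1 = 0" and r2: "p3*q2 - p2*q3 = 0" and r3: "2*p2*q2 + \<alpha>*p3*q3 = 0"
    and r4: "p4*q1 = 0" and r5: "p2*q2 - p4*q4 = 0" and r6: "p4*q2 + p2*q4 - p3*q3 = 0"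
    by simp_all
  consider "p3 = 0" "p4 = 0" | "p3 = 0" "p4 \<noteq> 0" | "p3 \<noteq> 0" "q3 = 0"
    using degenerate by blast
  then show ?thesis
  proof cases
    case 1
    then have "p2 \<noteq> 0" using pn by (simp add: zero4_def)
    then have "q2 = 0" "q3 = 0" "q4 = 0" using r2 r3 r6 1 two_nonzero by simp_all
    then show ?thesis
      using 1 \<open>p2 \<noteq> 0\<close> qn
      by (intro listed_pointsI[where i=0 and a="P4 0 1 0 0" and b="P4 1 0 0 0" and c=p2 and d=q1])
        (auto simp: zero4_def)
  next
    case 2
    then have "q1 = 0" using r4 by simp
    have "p2 = 0"
    proof (rule ccontr)
      assume "p2 \<noteq> 0"
      then have "q2 = 0" "q3 = 0" using r2 r3 2 two_nonzero by simp_all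
      then show False using qn r5 2 \<open>q1 = 0\<close> by (simp add: zero4_def)
    qed
    then have "q2 = 0" "q4 = 0" using r5 r6 2 by simp_all
    then show ?thesis
      using 2 \<open>p2 = 0\<close> \<open>q1 = 0\<close> qn
      by (intro listed_pointsI[where i=0 and a="P4 0 0 0 1" and b="P4 0 0 1 0" and c=p4 and d=q3])
        (auto simp: zero4_def)
  next
    case 3
    then have "q1 = 0" "q2 = 0" using r1 r2 by simp_all
    then have "q4 \<noteq> 0" using qn 3 by (simp add: zero4_def)
    then have "p4 = 0" "p2 = 0" using r5 r6 3 \<open>q2 = 0\<close> by simp_all
    then show ?thesis
      using 3 \<open>q1 = 0\<close> \<open>q2 = 0\<close> \<open>q4 \<noteq> 0\<close>
      by (intro listed_pointsI[where i=0 and a="P4 0 0 1 0" and b="P4 0 0 0 1" and c=p3 and d=q4])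
        auto
  qed
qed

lemma rels_family_iv:
  assumes R: "rels \<alpha> (P4 0 p2 p3 p4) (P4 q1 q2 q3 q4)" and p3: "p3 \<noteq> 0" and q3: "q3 \<noteq> 0"
  shows "(proj_class (P4 0 p2 p3 p4), proj_class (P4 q1 q2 q3 q4)) \<in> listed_points \<alpha>"
proof -
  from R have q1: "q1 = 0" and r2: "p3*q2 - p2*q3 = 0" and r3: "2*p2*q2 + \<alpha>*p3*q3 = 0"
    and r5: "p2*q2 - p4*q4 = 0" and r6: "p4*q2 + p2*q4 - p3*q3 = 0"
    using p3 by simp_all
  have q2: "q2 = p2*q3/p3" using r2 p3 by (simp add: field_simps)
  have "(2*p2^2 + \<alpha>*p3^2) * q3 = 0"
    using r3 p3 unfolding q2 by (simp add: field_simps power2_eq_square)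
  then have quadric: "\<alpha>*p3^2 = -2*p2^2" using q3 by (simp add: eq_neg_iff_add_eq_0 add.commute)
  then have p2: "p2 \<noteq> 0" using alpha_nonzero p3 by auto
  have "p2^2*q3 = p3*p4*q4" using r5 p3 unfolding q2 by (simp add: field_simps power2_eq_square)
  then have p4: "p4 \<noteq> 0" and q4: "q4 = p2^2*q3/(p3*p4)" using p2 p3 q3 by (auto simp: field_simps)
  have "(p4^2*p2 + p2^3 - p3^2*p4) * q3 = 0"
    using r6 p3 p4 unfolding q2 q4 by (simp add: field_simps power2_eq_square power3_eq_cube)
  then have "\<alpha>*(p4^2*p2 + p2^3) = \<alpha>*(p3^2*p4)" using q3 by simp
  then have "p2 * (\<alpha>*p4^2 + 2*p2*p4 + \<alpha>*p2^2) = 0"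
    using quadric by algebra
  then have conic: "\<alpha>*p4^2 + 2*p2*p4 + \<alpha>*p2^2 = 0" using p2 by simp
  have "(P4 0 (p2/p4) (p3/p4) 1, P4 0 (p2/p4) (p3/p4) ((p2/p4)^2)) \<in> L \<alpha> 4"
    using conic quadric p4 by (intro L_family_iv_memI) (simp_all add: field_simps power2_eq_square)
  then show ?thesis
    by (rule listed_pointsI[where c=p4 and d="q3*p4/p3"])
      (use p3 p4 q3 in \<open>simp_all add: q1 q2 q4 field_simps power2_eq_square\<close>)
qed

lemma rels_family_iii:
  assumes R: "rels \<alpha> (P4 p1 p2 0 p4) (P4 q1 q2 q3 q4)" and p1: "p1 \<noteq> 0" and q1: "q1 \<noteq> 0"
  shows "(proj_class (P4 p1 p2 0 p4), proj_class (P4 q1 q2 q3 q4)) \<in> listed_points \<alpha>"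
proof -
  from R have q3: "q3 = 0" and r3: "2*p2*q2 = p1*q1" and r4: "p4*q1 + p1*q4 = 0"
    and r5: "p2*q2 = p4*q4" and r6: "p4*q2 + p2*q4 = 0"
    using p1 by simp_all
  have q4: "q4 = -p4*q1/p1" using r4 p1 by (simp add: field_simps eq_neg_iff_add_eq_0 add.commute)
  have "p1*(p2*q2) = -(p4^2)*q1"
    using r5 p1 unfolding q4 by (simp add: field_simps power2_eq_square)
  then have "(p1^2 + 2*p4^2) * q1 = 0" using r3 by algebra
  then have p1_sq: "p1^2 = -2*p4^2" using q1 by (simp add: eq_neg_iff_add_eq_0)
  then have p4: "p4 \<noteq> 0" using p1 by auto
  have q2: "q2 = p2*q1/p1" using r6 p1 p4 unfolding q4 by (simp add: field_simps)
  have "(p2^2 + p4^2) * q1 = 0"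
    using r5 p1 unfolding q2 q4 by (simp add: field_simps power2_eq_square)
  then have p2_sq: "p2^2 = -(p4^2)" using q1 by (simp add: eq_neg_iff_add_eq_0)
  have "(P4 (p1/p4) (p2/p4) 0 1, P4 (-(p1/p4)) (-(p2/p4)) 0 1) \<in> L \<alpha> 3"
    using p1_sq p2_sq p4 by (intro L_family_iii_memI) (simp_all add: field_simps power2_eq_square)
  then show ?thesis
    by (rule listed_pointsI[where c=p4 and d="-p4*q1/p1"])
      (use p1 p4 q1 in \<open>simp_all add: q2 q3 q4 field_simps\<close>)
qed

lemma rels_families_i_ii:
  assumes R: "rels \<alpha> (P4 p1 p2 p3 p4) (P4 q1 q2 q3 q4)"
    and p1: "p1 \<noteq> 0" and q1: "q1 \<noteq> 0" and p3: "p3 \<noteq> 0"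
  shows "(proj_class (P4 p1 p2 p3 p4), proj_class (P4 q1 q2 q3 q4)) \<in> listed_points \<alpha>"
proof -
  from R have r1: "p3*q1 + p1*q3 = 0" and r2: "p3*q2 - p2*q3 = 0"
    and r3: "2*p2*q2 + \<alpha>*p3*q3 - p1*q1 = 0" and r4: "p4*q1 + p1*q4 = 0"
    and r5: "p2*q2 - p4*q4 = 0" and r6: "p4*q2 + p2*q4 - p3*q3 = 0"
    by simp_all
  have q3: "q3 = -p3*q1/p1" using r1 p1 by (simp add: field_simps eq_neg_iff_add_eq_0 add.commute)
  have q4: "q4 = -p4*q1/p1" using r4 p1 by (simp add: field_simps eq_neg_iff_add_eq_0 add.commute)
  have "p3*(p1*q2 + p2*q1) = 0" using r2 p1 unfolding q3 by (simp add: field_simps)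
  then have "p1*q2 + p2*q1 = 0" using p3 by simp
  then have q2: "q2 = -p2*q1/p1" using p1 by (simp add: field_simps eq_neg_iff_add_eq_0)
  have "(p3^2 - 2*p2*p4) * q1 = 0"
    using r6 p1 unfolding q2 q3 q4 by (simp add: field_simps power2_eq_square)
  then have p3_sq: "p3^2 = 2*p2*p4" using q1 by simp
  have "(p4^2 - p2^2) * q1 = 0"
    using r5 p1 unfolding q2 q4 by (simp add: field_simps power2_eq_square)
  then have "(p2 - p4) * (p2 + p4) = 0" using q1 by (simp add: algebra_simps power2_eq_square)
  then consider "p2 = p4" | "p2 = -p4" by (auto simp: eq_neg_iff_add_eq_0)
  moreover have "-(\<alpha>*p3^2*q1) = (p1^2 + 2*p2^2) * q1"
    using r3 p1 unfolding q2 q3 by (simp add: field_simps power2_eq_square)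
  then have "(p1^2 + 2*p2^2 + \<alpha>*p3^2) * q1 = 0" by algebra
  then have "p1^2 + 2*p2^2 + \<alpha>*p3^2 = 0" using q1 by simp
  then have p1_sq: "p1^2 = -2*p2^2 - \<alpha>*p3^2" by algebra
  moreover have p4: "p4 \<noteq> 0" using p3_sq p3 by auto
  moreover have q: "P4 q1 q2 q3 q4 = smul4 (-p4*q1/p1) (P4 (-(p1/p4)) (p2/p4) (p3/p4) 1)"
    using p1 p4 by (simp add: q2 q3 q4 field_simps)
  ultimately show ?thesis
  proof cases
    case 1
    have "(P4 (p1/p4) 1 (p3/p4) 1, P4 (-(p1/p4)) 1 (p3/p4) 1) \<in> L \<alpha> 1"
      using p1_sq p3_sq p4 1
      by (intro L_family_i_memI) (simp_all add: field_simps power2_eq_square)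
    then show ?thesis
      by (rule listed_pointsI[where c=p4 and d="-p4*q1/p1"]) (use p1 p4 q1 q 1 in simp_all)
  next
    case 2
    have "(P4 (p1/p4) (-1) (p3/p4) 1, P4 (-(p1/p4)) (-1) (p3/p4) 1) \<in> L \<alpha> 2"
      using p1_sq p3_sq p4 2
      by (intro L_family_ii_memI) (simp_all add: field_simps power2_eq_square)
    then show ?thesis
      by (rule listed_pointsI[where c=p4 and d="-p4*q1/p1"]) (use p1 p4 q1 q 2 in simp_all)
  qed
qed

lemma rels_solution_listed:
  assumes "rels \<alpha> p q" "p \<noteq> zero4" "q \<noteq> zero4"
  shows "(proj_class p, proj_class q) \<in> listed_points \<alpha>"
proof -
  obtain p1 p2 p3 p4 q1 q2 q3 q4 where pq: "p = P4 p1 p2 p3 p4" "q = P4 q1 q2 q3 q4"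
    by (cases p, cases q)
  consider "p1 = 0" "p3 = 0 \<or> q3 = 0" | "p1 = 0" "p3 \<noteq> 0" "q3 \<noteq> 0" | "p1 \<noteq> 0" "q1 = 0"
    | "p1 \<noteq> 0" "q1 \<noteq> 0" "p3 = 0" | "p1 \<noteq> 0" "q1 \<noteq> 0" "p3 \<noteq> 0"
    by blast
  then show ?thesis
  proof cases
    case 3
    then have "q3 = 0" "q4 = 0" "p2 = 0" "p3 = 0" "p4 = 0" "q2 \<noteq> 0"
      using assms unfolding pq by (auto simp: zero4_def)
    then show ?thesis
      unfolding pq using 3
      by (intro listed_pointsI[where i=0 and a="P4 1 0 0 0" and b="P4 0 1 0 0" and c=p1 and d=q2])
        auto
  qed (use assms rels_first_zero_degenerate rels_family_iv rels_family_iii rels_families_i_ii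
      in \<open>simp_all add: pq\<close>)
qed

section \<open>The point scheme is the graph of an involution\<close>

lemma L_nonzero_solution:
  assumes "(a, b) \<in> L \<alpha> i"
  shows "a \<noteq> zero4 \<and> b \<noteq> zero4 \<and> rels \<alpha> a b"
  using assms
proof (cases rule: L_memE)
  case coordinate
  then show ?thesis by (auto simp: zero4_def)
next
  case (family_i l1 l3)
  show ?thesis
    unfolding family_i(2,3) using family_i(4,5) by (simp add: zero4_def) (intro conjI; algebra)
next
  case (family_ii l1 l3)
  show ?thesis
    unfolding family_ii(2,3) using family_ii(4,5) by (simp add: zero4_def) (intro conjI; algebra)
next
  case (family_iii l1 l2)
  show ?thesis
    unfolding family_iii(2,3) using family_iii(4,5) by (simp add: zero4_def) (intro conjI; algebra)
next
  case (family_iv l2 l3)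
  note params = family_iv_parameters[OF family_iv(4,5)]
  show ?thesis
    unfolding family_iv(2,3) using family_iv(4,5) params(3)
    by (simp add: zero4_def params(1) power2_eq_square power3_eq_cube) algebra
qed

lemma Gamma_eq_listed_points: "Gamma \<alpha> = listed_points \<alpha>"
proof
  show "Gamma \<alpha> \<subseteq> listed_points \<alpha>"
    unfolding Gamma_def using rels_solution_listed by blast
  show "listed_points \<alpha> \<subseteq> Gamma \<alpha>"
    unfolding listed_points_def Gamma_def
    using L_nonzero_solution by (fastforce elim: family_pointsE)
qed

lemma L_family_index:
  assumes "(a, b) \<in> L \<alpha> i"
  shows "family_index a = i"
  using assms
proof (cases rule: L_memE)
  case coordinate
  then show ?thesis by (auto simp: family_index_def)
next
  case (family_i l1 l3)
  then show ?thesis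
    using square_roots_nonzero(1)[OF family_i(4)] square_roots_nonzero(3)[OF family_i(5)]
    by (simp add: family_index_def)
next
  case (family_ii l1 l3)
  then show ?thesis
    using square_roots_nonzero(2)[OF family_ii(4)] square_roots_nonzero(4)[OF family_ii(5)]
      one_neq_minus_one
    by (simp add: family_index_def)
next
  case (family_iii l1 l2)
  then show ?thesis
    using square_roots_nonzero(4)[OF family_iii(4)] by (simp add: family_index_def)
next
  case (family_iv l2 l3)
  then show ?thesis
    using family_iv_parameters(1)[OF family_iv(4,5)] by (simp add: family_index_def)
qed


lemma L_functional: "(a, b) \<in> L \<alpha> i \<Longrightarrow> (a, b') \<in> L \<alpha> i \<Longrightarrow> b = b'"
  by (cases "(\<alpha>, i)" rule: L.cases) auto

lemma L_first_proj_class_inj: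
  assumes "(a, b) \<in> L \<alpha> i" "(a', b') \<in> L \<alpha> j" "proj_class a = proj_class a'"
  shows "a' = a"
proof -
  obtain c where "c \<noteq> 0" "a' = smul4 c a"
    using proj_class_eq_iff L_nonzero_solution[OF assms(1)] L_nonzero_solution[OF assms(2)] assms(3)
    by blast
  then show ?thesis by (rule L_first_scalar_multiple[OF assms(1,2)])
qed

lemma listed_points_functional:
  assumes "(P, Q) \<in> listed_points \<alpha>" "(P, Q') \<in> listed_points \<alpha>"
  shows "Q = Q'"
proof -
  obtain i a b where ab: "(a, b) \<in> L \<alpha> i" and P: "P = proj_class a" and Q: "Q = proj_class b"
    using assms(1) by (rule listed_pointsE)
  obtain j a' b' where ab': "(a', b') \<in> L \<alpha> j" and P': "P = proj_class a'"
    and Q': "Q' = proj_class b'"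
    using assms(2) by (rule listed_pointsE)
  have "a' = a" using L_first_proj_class_inj[OF ab ab'] P P' by simp
  moreover have "i = j" using L_family_index[OF ab] L_family_index[OF ab'] \<open>a' = a\<close> by simp
  ultimately have "(a, b') \<in> L \<alpha> i" using ab' by simp
  then have "b' = b" using L_functional[OF ab] by simp
  then show ?thesis using Q Q' by simp
qed

lemma sigma_eqI:
  assumes "(P, Q) \<in> Gamma \<alpha>"
  shows "sigma \<alpha> P = Q"
  unfolding sigma_def
proof (rule the_equality)
  show "(P, Q) \<in> Gamma \<alpha>" by (fact assms)
  show "Q' = Q" if "(P, Q') \<in> Gamma \<alpha>" for Q'
    using listed_points_functional that assms unfolding Gamma_eq_listed_points by blast
qed

lemma family_points_sym:
  assumes "(P, Q) \<in> family_points \<alpha> i"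
  shows "(Q, P) \<in> family_points \<alpha> i"
proof -
  obtain a b where ab: "(a, b) \<in> L \<alpha> i" and P: "P = proj_class a" and Q: "Q = proj_class b"
    using assms by (rule family_pointsE)
  from ab have "(proj_class b, proj_class a) \<in> family_points \<alpha> i"
  proof (cases rule: L_memE)
    case coordinate
    then show ?thesis using family_pointsI[of _ _ \<alpha> 0] by auto
  next
    case (family_i l1 l3)
    then show ?thesis using family_pointsI[OF L_family_i_memI[of "-l1"]] by simp
  next
    case (family_ii l1 l3)
    then show ?thesis using family_pointsI[OF L_family_ii_memI[of "-l1"]] by simp
  next
    case (family_iii l1 l2)
    then show ?thesis using family_pointsI[OF L_family_iii_memI[of "-l1" "-l2"]] by simp
  next
    case (family_iv l2 l3)
    \<comment> \<open>the parameter \<open>l2\<close> is replaced by the other root \<open>1/l2\<close> of \<open>\<alpha>x\<^sup>2 + 2x + \<alpha>\<close>\<close>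
    have l2: "l2 \<noteq> 0" using family_iv_parameters(1)[OF family_iv(4,5)] .
    then have l2_sq: "l2^2 \<noteq> 0" by simp
    have "\<alpha>*(1/l2)^2 + 2*(1/l2) + \<alpha> = (\<alpha>*l2^2 + 2*l2 + \<alpha>) / l2^2"
      using l2 by (simp add: field_simps power2_eq_square)
    moreover have "\<alpha>*(l3/l2^2)^2 = (\<alpha>*l3^2) / l2^2 / l2^2"
      by (simp add: power_divide power2_eq_square)
    ultimately have swapped: "(P4 0 (1/l2) (l3/l2^2) 1, P4 0 (1/l2) (l3/l2^2) ((1/l2)^2)) \<in> L \<alpha> 4"
      using family_iv(4,5) l2
      by (intro L_family_iv_memI) (simp_all add: field_simps power2_eq_square)
    have "b = smul4 (l2^2) (P4 0 (1/l2) (l3/l2^2) 1)"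
      and "a = smul4 (l2^2) (P4 0 (1/l2) (l3/l2^2) ((1/l2)^2))"
      using family_iv(2,3) l2 by (simp_all add: power2_eq_square)
    then have "proj_class b = proj_class (P4 0 (1/l2) (l3/l2^2) 1)"
      and "proj_class a = proj_class (P4 0 (1/l2) (l3/l2^2) ((1/l2)^2))"
      by (simp_all only: proj_class_smul4[OF l2_sq])
    then show ?thesis
      using family_pointsI[OF swapped] family_iv(1) by simp
  qed
  then show ?thesis using P Q by simp
qed

lemma L_pair_distinct:
  assumes "(a, b) \<in> L \<alpha> i"
  shows "proj_class a \<noteq> proj_class b"
proof
  assume "proj_class a = proj_class b"
  then obtain c where c: "c \<noteq> 0" "b = smul4 c a"
    using proj_class_eq_iff L_nonzero_solution[OF assms] by blast
  from assms show False
  proof (cases rule: L_memE)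
    case coordinate
    then show False using c by auto
  next
    case (family_i l1 l3)
    then show False
      using c square_roots_nonzero(1)[OF family_i(4)] by (auto simp: self_eq_neg_iff)
  next
    case (family_ii l1 l3)
    then show False
      using c square_roots_nonzero(2)[OF family_ii(4)] by (auto simp: self_eq_neg_iff)
  next
    case (family_iii l1 l2)
    then show False
      using c square_roots_nonzero(4)[OF family_iii(4)] by (auto simp: self_eq_neg_iff)
  next
    case (family_iv l2 l3)
    then show False using c family_iv_parameters(1,4)[OF family_iv(4,5)] by auto
  qed
qed

lemma family_points_subset_Gamma: "i \<le> 4 \<Longrightarrow> family_points \<alpha> i \<subseteq> Gamma \<alpha>"
  unfolding Gamma_eq_listed_points listed_points_def by blast

lemma sigma_family_points:
  assumes "(P, Q) \<in> family_points \<alpha> i" "i \<le> 4"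
  shows "sigma \<alpha> P = Q" "sigma \<alpha> Q = P"
  using assms family_points_sym[OF assms(1)] family_points_subset_Gamma sigma_eqI by blast+

lemma sigma_image_Z:
  assumes "i \<le> 4"
  shows "sigma \<alpha> ` Z \<alpha> i = Z \<alpha> i"
proof -
  have "sigma \<alpha> ` Z \<alpha> i = snd ` family_points \<alpha> i"
    unfolding Z_eq_fst_family_points image_image
    using sigma_family_points(1)[OF _ assms] by (force intro: image_cong)
  also have "\<dots> = fst ` family_points \<alpha> i"
    using family_points_sym by force
  finally show ?thesis unfolding Z_eq_fst_family_points .
qed

lemma frakp_eq_Union_Z: "frakp \<alpha> = (\<Union>i\<le>4. Z \<alpha> i)"
  unfolding frakp_def Gamma_eq_listed_points listed_points_def Z_eq_fst_family_points
  by (simp add: image_UN)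

lemma sigma_on_frakp:
  assumes "P \<in> frakp \<alpha>"
  shows "sigma \<alpha> P \<in> frakp \<alpha>" "sigma \<alpha> (sigma \<alpha> P) = P" "sigma \<alpha> P \<noteq> P"
proof -
  obtain i Q where i: "i \<le> 4" and PQ: "(P, Q) \<in> family_points \<alpha> i"
    using assms unfolding frakp_eq_Union_Z Z_eq_fst_family_points by force
  obtain a b where "(a, b) \<in> L \<alpha> i" "P = proj_class a" "Q = proj_class b"
    using PQ by (rule family_pointsE)
  then have "P \<noteq> Q" using L_pair_distinct by blast
  then show "sigma \<alpha> P \<in> frakp \<alpha>" "sigma \<alpha> (sigma \<alpha> P) = P" "sigma \<alpha> P \<noteq> P"
    using sigma_family_points[OF PQ i] family_points_sym[OF PQ] i
    unfolding frakp_eq_Union_Z Z_eq_fst_family_points by force+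
qed

lemma Z_disjoint:
  assumes "i \<noteq> j"
  shows "Z \<alpha> i \<inter> Z \<alpha> j = {}"
proof -
  have False if "(a, b) \<in> L \<alpha> i" "(a', b') \<in> L \<alpha> j" "proj_class a = proj_class a'" for a b a' b'
    using L_first_proj_class_inj[OF that] L_family_index[OF that(1)] L_family_index[OF that(2)]
      assms by simp
  then show ?thesis unfolding Z_def by fastforce
qed

end

section \<open>Counting the points and the orbits\<close>

locale point_scheme_closed = point_scheme \<alpha> for \<alpha> :: "'k::field" +
  assumes alg_closed: "alg_closed TYPE('k)"
begin

lemma card_square_roots:
  assumes "c \<noteq> 0"
  shows "card {x::'k. x^2 = c} = 2"
proof -
  have "0^2 - 4*1*(-c) \<noteq> (0::'k)" using four_nonzero assms by simp
  then have "card {x. 1*x^2 + 0*x + (-c) = 0} = 2"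
    by (rule card_quadratic_roots[OF alg_closed one_neq_zero])
  then show ?thesis by simp
qed

lemma card_first_coordinates_family_iv: "card (fst ` L \<alpha> 4) = 4"
proof -
  define roots where "roots = {x::'k. \<alpha>*x^2 + 2*x + \<alpha> = 0}"
  have first_coordinates:
    "fst ` L \<alpha> 4 = (\<lambda>(x, y). P4 0 x y 1) ` (SIGMA x:roots. {y. \<alpha>*y^2 = -2*x^2})"
    unfolding roots_def by (force simp: numeral_eq_Suc)
  have card_roots: "card roots = 2"
  proof -
    have "2^2 - 4*\<alpha>*\<alpha> = (4::'k) * (1 - \<alpha>^2)" by (simp add: power2_eq_square algebra_simps)
    then have "2^2 - 4*\<alpha>*\<alpha> \<noteq> (0::'k)"
      using four_nonzero alpha_sq_neq_one by simp
    then show ?thesis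
      unfolding roots_def by (rule card_quadratic_roots[OF alg_closed alpha_nonzero])
  qed
  have card_fibres: "card {y. \<alpha>*y^2 = -2*x^2} = 2" if "x \<in> roots" for x
  proof -
    have "x \<noteq> 0" using that alpha_nonzero unfolding roots_def by auto
    then have "-2*x^2/\<alpha> \<noteq> 0" using alpha_nonzero two_nonzero by simp
    moreover have "{y. \<alpha>*y^2 = -2*x^2} = {y. y^2 = -2*x^2/\<alpha>}"
      using alpha_nonzero by (auto simp: field_simps)
    ultimately show ?thesis using card_square_roots by simp
  qed
  have "finite roots" "\<forall>x\<in>roots. finite {y. \<alpha>*y^2 = -2*x^2}"
    using card_roots card_fibres by (auto intro: card_ge_0_finite)
  then have "card (SIGMA x:roots. {y. \<alpha>*y^2 = -2*x^2})
      = (\<Sum>x\<in>roots. card {y. \<alpha>*y^2 = -2*x^2})"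
    by (rule card_SigmaI)
  also have "\<dots> = 4" using card_roots card_fibres by simp
  finally show ?thesis
    unfolding first_coordinates by (simp add: card_image inj_on_def)
qed

lemma card_first_coordinates:
  assumes "i \<le> 4"
  shows "card (fst ` L \<alpha> i) = 4"
proof -
  have "i = 0 \<or> i = 1 \<or> i = 2 \<or> i = 3 \<or> i = 4" using assms by auto
  then show ?thesis
  proof (elim disjE)
    assume "i = 0"
    then show ?thesis by simp
  next
    assume "i = 1"
    have "fst ` L \<alpha> 1 = (\<lambda>(x, y). P4 x 1 y 1) ` ({x. x^2 = -2*(1+\<alpha>)} \<times> {y. y^2 = 2})"
      by force
    then show ?thesis
      using \<open>i = 1\<close> card_square_roots[OF family_constants_nonzero(1)]
        card_square_roots[OF two_nonzero]
      by (simp add: card_image inj_on_def card_cartesian_product)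
  next
    assume "i = 2"
    have "fst ` L \<alpha> 2 = (\<lambda>(x, y). P4 x (-1) y 1) ` ({x. x^2 = -2*(1-\<alpha>)} \<times> {y. y^2 = -2})"
      by (force simp: numeral_eq_Suc)
    then show ?thesis
      using \<open>i = 2\<close> card_square_roots[OF family_constants_nonzero(2)]
        card_square_roots[OF family_constants_nonzero(3)]
      by (simp add: card_image inj_on_def card_cartesian_product)
  next
    assume "i = 3"
    have "fst ` L \<alpha> 3 = (\<lambda>(x, y). P4 x y 0 1) ` ({x. x^2 = -2} \<times> {y. y^2 = -1})"
      by (force simp: numeral_eq_Suc)
    then show ?thesis
      using \<open>i = 3\<close> card_square_roots[OF family_constants_nonzero(3)]
        card_square_roots[OF family_constants_nonzero(4)]
      by (simp add: card_image inj_on_def card_cartesian_product)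
  next
    assume "i = 4"
    then show ?thesis by (simp add: card_first_coordinates_family_iv)
  qed
qed

lemma card_Z: "i \<le> 4 \<Longrightarrow> card (Z \<alpha> i) = 4"
proof -
  have "inj_on proj_class (fst ` L \<alpha> i)"
    by (rule inj_onI) (auto dest: L_first_proj_class_inj)
  moreover have "Z \<alpha> i = proj_class ` fst ` L \<alpha> i"
    unfolding Z_def image_image by (simp add: case_prod_beta')
  moreover assume "i \<le> 4"
  ultimately show ?thesis using card_first_coordinates by (simp add: card_image)
qed

lemma card_frakp: "card (frakp \<alpha>) = 20"
proof -
  have "finite (Z \<alpha> i)" if "i \<le> 4" for i
    using card_Z[OF that] by (intro card_ge_0_finite) simp
  then have "card (\<Union>i\<le>4. Z \<alpha> i) = (\<Sum>i\<le>4. card (Z \<alpha> i))"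
    using Z_disjoint by (intro card_UN_disjoint) auto
  also have "\<dots> = 20" using card_Z by simp
  finally show ?thesis unfolding frakp_eq_Union_Z .
qed

lemma sigma_orbit_eq: "P \<in> frakp \<alpha> \<Longrightarrow> sigma_orbit \<alpha> P = {P, sigma \<alpha> P}"
  unfolding sigma_orbit_def using sigma_on_frakp(2) by (rule funpow_orbit_involution)

lemma card_sigma_orbits: "card (sigma_orbit \<alpha> ` frakp \<alpha>) = 10"
proof -
  have "finite (frakp \<alpha>)" using card_frakp by (intro card_ge_0_finite) simp
  then have "2 * card ((\<lambda>P. {P, sigma \<alpha> P}) ` frakp \<alpha>) = card (frakp \<alpha>)"
    using sigma_on_frakp by (intro card_orbits_involution) auto
  moreover have "sigma_orbit \<alpha> ` frakp \<alpha> = (\<lambda>P. {P, sigma \<alpha> P}) ` frakp \<alpha>"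
    using sigma_orbit_eq by (rule image_cong[OF refl])
  ultimately show ?thesis using card_frakp by simp
qed

lemma card_sigma_orbit: "Orb \<in> sigma_orbit \<alpha> ` frakp \<alpha> \<Longrightarrow> card Orb = 2"
  using sigma_orbit_eq sigma_on_frakp(3) by (auto simp: eq_commute[of _ "sigma \<alpha> _"])

end

theorem corollary2p3:
  fixes \<alpha> :: "'k::field"
  assumes "alg_closed TYPE('k)"
    and "(2::'k) \<noteq> 0"
    and "\<alpha> * (1 - \<alpha>^2) \<noteq> 0"
  shows "Gamma \<alpha> = (\<Union>i\<le>4. (\<lambda>(a, b). (proj_class a, proj_class b)) ` L \<alpha> i)
    \<and> (\<forall>(P, Q) \<in> Gamma \<alpha>. Q = sigma \<alpha> P)
    \<and> (\<forall>i\<le>4. sigma \<alpha> ` Z \<alpha> i = Z \<alpha> i)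
    \<and> card (sigma_orbit \<alpha> ` frakp \<alpha>) = 10
    \<and> (\<forall>Orb \<in> sigma_orbit \<alpha> ` frakp \<alpha>. card Orb = 2)"
proof -
  interpret point_scheme_closed \<alpha>
    using assms by unfold_locales
  show ?thesis
  proof (intro conjI)
    show "Gamma \<alpha> = (\<Union>i\<le>4. (\<lambda>(a, b). (proj_class a, proj_class b)) ` L \<alpha> i)"
      using Gamma_eq_listed_points unfolding listed_points_def family_points_def .
    show "\<forall>(P, Q) \<in> Gamma \<alpha>. Q = sigma \<alpha> P"
      using sigma_eqI by auto
  qed (use sigma_image_Z card_sigma_orbits card_sigma_orbit in auto)
qed

end
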